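(* For every set of formulas $\Gamma$ and formula $\alpha$: $\circ^{*}(Var(\Gamma\cup\{\alpha\})),\Gamma\vdash_{LFI3}\alpha$ if and only if $\Gamma\vdash_{CPL}\alpha$, where $\circ^{*}(X)=\{\circ^{*}p: p\in X\}$.
   Context: Formulas are built from a countable set of propositional variables using unary $\neg,\circ$ and binary $\land,\lor,\to$. Define $\circ^*\alpha:=(\alpha\land\circ\alpha\land\circ\circ\alpha)\lor(\neg\alpha\land\circ\alpha\land\circ\circ\alpha)$. $Var(\Delta)$ is the set of propositional variables occurring in $\Delta$. On $\{0,1\}$ use Boolean $\land,\lor,\to,\sim$. Let $\mathbb{B}=\{x\in\{0,1\}^3: x_1\lor x_2=1,\ x_3\lor\sim(x_1\land x_2)=1\}$, with $T=(1,0,0)$ and $F=(0,1,0)$. The LFI3 algebra on $\mathbb{B}$: $a\dot\land b=(a_1\land b_1,\ a_2\lor b_2,\ (\sim a_2\land b_3)\lor(a_3\land\sim b_2)\lor(a_3\land b_3))$; $a\dot\lor b=(a_1\lor b_1,\ a_2\land b_2,\ (\sim a_1\land b_3)\lor(a_3\land\sim b_1)\lor(a_3\land b_3))$; $a\dot\to b=(a_1\to b_1,\ b_2\land(\sim a_2\lor a_3),\ (\sim a_2\land b_3)\lor(\sim a_2\land a_3\land\sim b_1)\lor(a_3\land b_3)\lor(\sim a_1\land a_3\land\sim b_1))$; $\dot\neg a=(a_2,a_1,a_3)$; $\dot\circ a=(\sim(a_1\land a_2),a_3,a_3\land\sim(a_1\land a_2))$; designated set $\{x:x_1=1\}$. CPL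 is the matrix logic of the two-element subalgebra $\{T,F\}$ with designated set $\{T\}$ (usual two-valued tables, $\circ\alpha$ always true). For matrix logics, $\Gamma\vdash\alpha$ iff every homomorphic valuation designating all of $\Gamma$ designates $\alpha$. *)

theory Defs
  imports Main
begin

datatype fm = Atom nat | Neg fm | Circ fm | And fm fm | Or fm fm | Imp fm fm

primrec vars :: "fm \<Rightarrow> nat set" where
  "vars (Atom p) = {p}"
| "vars (Neg a) = vars a"
| "vars (Circ a) = vars a"
| "vars (And a b) = vars a \<union> vars b"
| "vars (Or a b) = vars a \<union> vars b"
| "vars (Imp a b) = vars a \<union> vars b"

definition Vars :: "fm set \<Rightarrow> nat set" where
  "Vars \<Delta> = (\<Union>a\<in>\<Delta>. vars a)"

definition circstar :: "fm \<Rightarrow> fm" where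
  "circstar a = Or (And (And a (Circ a)) (Circ (Circ a)))
                   (And (And (Neg a) (Circ a)) (Circ (Circ a)))"

type_synonym tv = "bool \<times> bool \<times> bool"

definition BB :: "tv set" where
  "BB = {(x1, x2, x3). (x1 \<or> x2) \<and> (x3 \<or> \<not> (x1 \<and> x2))}"

definition TT :: tv where "TT = (True, False, False)"
definition FF :: tv where "FF = (False, True, False)"

fun tand :: "tv \<Rightarrow> tv \<Rightarrow> tv" where
  "tand (a1, a2, a3) (b1, b2, b3) =
     (a1 \<and> b1, a2 \<or> b2, (\<not> a2 \<and> b3) \<or> (a3 \<and> \<not> b2) \<or> (a3 \<and> b3))"

fun tor :: "tv \<Rightarrow> tv \<Rightarrow> tv" where
  "tor (a1, a2, a3) (b1, b2, b3) =
     (a1 \<or> b1, a2 \<and> b2, (\<not> a1 \<and> b3) \<or> (a3 \<and> \<not> b1) \<or> (a3 \<and> b3))"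

fun timp :: "tv \<Rightarrow> tv \<Rightarrow> tv" where
  "timp (a1, a2, a3) (b1, b2, b3) =
     (a1 \<longrightarrow> b1, b2 \<and> (\<not> a2 \<or> a3),
      (\<not> a2 \<and> b3) \<or> (\<not> a2 \<and> a3 \<and> \<not> b1) \<or> (a3 \<and> b3) \<or> (\<not> a1 \<and> a3 \<and> \<not> b1))"

fun tneg :: "tv \<Rightarrow> tv" where
  "tneg (a1, a2, a3) = (a2, a1, a3)"

fun tcirc :: "tv \<Rightarrow> tv" where
  "tcirc (a1, a2, a3) = (\<not> (a1 \<and> a2), a3, a3 \<and> \<not> (a1 \<and> a2))"

definition designated :: "tv \<Rightarrow> bool" where
  "designated x = fst x"

primrec eval :: "(nat \<Rightarrow> tv) \<Rightarrow> fm \<Rightarrow> tv" where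
  "eval v (Atom p) = v p"
| "eval v (Neg a) = tneg (eval v a)"
| "eval v (Circ a) = tcirc (eval v a)"
| "eval v (And a b) = tand (eval v a) (eval v b)"
| "eval v (Or a b) = tor (eval v a) (eval v b)"
| "eval v (Imp a b) = timp (eval v a) (eval v b)"

definition LFI3_cons :: "fm set \<Rightarrow> fm \<Rightarrow> bool" where
  "LFI3_cons \<Gamma> a \<longleftrightarrow> (\<forall>v. (\<forall>p. v p \<in> BB) \<longrightarrow>
      (\<forall>g\<in>\<Gamma>. designated (eval v g)) \<longrightarrow> designated (eval v a))"

definition CPL_cons :: "fm set \<Rightarrow> fm \<Rightarrow> bool" where
  "CPL_cons \<Gamma> a \<longleftrightarrow> (\<forall>v. (\<forall>p. v p \<in> {TT, FF}) \<longrightarrow>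
      (\<forall>g\<in>\<Gamma>. eval v g = TT) \<longrightarrow> eval v a = TT)"

end

theory Submission
  imports Defs
begin

text \<open>The formula \<open>circstar a\<close> is designated exactly when \<open>a\<close> takes a classical value \<open>TT\<close> or \<open>FF\<close>,
  and classical values are closed under the LFI3 operations, where they behave as in CPL. So
  the premises \<open>circstar p\<close> confine an LFI3 valuation to classical values on the relevant
  variables, and re-setting the remaining variables to \<open>TT\<close> yields a CPL valuation that agrees
  with it on \<open>\<Gamma>\<close> and \<open>\<alpha>\<close>; conversely every CPL valuation is an LFI3 valuation designating
  all \<open>circstar p\<close>.\<close>

lemma classical_subset_BB: "{TT, FF} \<subseteq> BB"
  by (auto simp: BB_def TT_def FF_def)

lemma designated_classical_iff: "x \<in> {TT, FF} \<Longrightarrow> designated x \<longleftrightarrow> x = TT"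
  by (auto simp: designated_def TT_def FF_def)

lemma eval_classical: "(\<And>p. v p \<in> {TT, FF}) \<Longrightarrow> eval v a \<in> {TT, FF}"
  by (induction a) (auto simp: TT_def FF_def)

lemma eval_cong: "(\<And>p. p \<in> vars a \<Longrightarrow> v p = w p) \<Longrightarrow> eval v a = eval w a"
  by (induction a) auto

lemma eval_circstar_classical: "eval v a \<in> {TT, FF} \<Longrightarrow> eval v (circstar a) = TT"
  by (auto simp: circstar_def TT_def FF_def)

lemma designated_circstar_iff: "designated (eval v (circstar a)) \<longleftrightarrow> eval v a \<in> {TT, FF}"
proof
  assume "designated (eval v (circstar a))"
  then show "eval v a \<in> {TT, FF}"
    by (cases "eval v a") (auto simp: circstar_def designated_def TT_def FF_def)
qed (simp add: eval_circstar_classical designated_def TT_def)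

lemma CPL_cons_if_LFI3_cons:
  assumes "LFI3_cons ((\<lambda>p. circstar (Atom p)) ` X \<union> \<Gamma>) \<alpha>"
  shows "CPL_cons \<Gamma> \<alpha>"
  unfolding CPL_cons_def
proof (intro allI impI)
  fix v assume classical: "\<forall>p. v p \<in> {TT, FF}" and \<Gamma>_true: "\<forall>g\<in>\<Gamma>. eval v g = TT"
  have "\<forall>p. v p \<in> BB"
    using classical classical_subset_BB by blast
  moreover have "\<forall>g \<in> (\<lambda>p. circstar (Atom p)) ` X \<union> \<Gamma>. designated (eval v g)"
    using classical \<Gamma>_true designated_circstar_iff[of v "Atom _"]
    by (auto simp: designated_def TT_def)
  ultimately have "designated (eval v \<alpha>)"
    using assms unfolding LFI3_cons_def by blast
  then show "eval v \<alpha> = TT"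
    using eval_classical classical designated_classical_iff by blast
qed

lemma LFI3_cons_if_CPL_cons:
  assumes "Vars (\<Gamma> \<union> {\<alpha>}) \<subseteq> X" and "CPL_cons \<Gamma> \<alpha>"
  shows "LFI3_cons ((\<lambda>p. circstar (Atom p)) ` X \<union> \<Gamma>) \<alpha>"
  unfolding LFI3_cons_def
proof (intro allI impI)
  fix v
  assume designated_prems: "\<forall>g \<in> (\<lambda>p. circstar (Atom p)) ` X \<union> \<Gamma>. designated (eval v g)"
  define w where "w p = (if p \<in> X then v p else TT)" for p
  have w_classical: "w p \<in> {TT, FF}" for p
    using designated_prems designated_circstar_iff[of v "Atom p"] by (auto simp: w_def)
  have w_agrees: "eval w g = eval v g" if "g \<in> \<Gamma> \<union> {\<alpha>}" for g
    using that assms(1) by (intro eval_cong) (auto simp: w_def Vars_def)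
  have "\<forall>g\<in>\<Gamma>. eval w g = TT"
  proof
    fix g assume "g \<in> \<Gamma>"
    then have "designated (eval w g)"
      using designated_prems w_agrees by auto
    then show "eval w g = TT"
      using eval_classical[of w g] w_classical designated_classical_iff by blast
  qed
  then have "eval w \<alpha> = TT"
    using assms(2) w_classical unfolding CPL_cons_def by blast
  then show "designated (eval v \<alpha>)"
    using w_agrees by (simp add: designated_def TT_def)
qed

theorem theorem21:
  fixes \<Gamma> :: "fm set" and \<alpha> :: fm
  shows "LFI3_cons ((\<lambda>p. circstar (Atom p)) ` Vars (\<Gamma> \<union> {\<alpha>}) \<union> \<Gamma>) \<alpha> \<longleftrightarrow> CPL_cons \<Gamma> \<alpha>"
  using CPL_cons_if_LFI3_cons LFI3_cons_if_CPL_cons by blast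

end
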